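(* Let $f\colon S^1\to S^1$ be a self-transverse smooth map, let $J$ be an arc in the range whose endpoints $x,y$ are regular values of $f$, and suppose that $J_+$ is a positive arc and $J_-$ a negative arc in $f^{-1}(J)$. Then there exists an embedded path $p\colon(I,\partial I)\to(S^1,f^{-1}(x))$ which either starts with $J_+$ and ends with some negative arc $J'_-$ of $f^{-1}(J)$, or starts with $J_-$ and ends with some positive arc $J'_+$ of $f^{-1}(J)$, such that $f\circ p\colon(I,\partial I)\to(S^1,\{x\})$ factors through $(\mathbb{R},\{0\})$ (i.e. lifts to the universal cover $\mathbb{R}\to S^1$ with both endpoints going to $0$).
   Context: Orient both circles. For an arc $J$ in the range transverse to $f$, an orientation of $J$ induces an orientation of $f^{-1}(J)$ via the co-orientation. A component $C$ of $f^{-1}(J)$ is a positive (resp. negative) arc if $f|_C\colon(C,\partial C)\to(J,\partial J)$ has degree $+1$ (resp. $-1$). "Starts with $J_+$" means $J_+$ is an initial subarc of the path $p$ (beginning at its endpoint in $f^{-1}(x)$), and "ends with $J'_-$" means $J'_-$ is a terminal subarc of $p$. *)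

theory Defs
  imports "HOL-Analysis.Analysis"
begin

text \<open>The circle S^1 is the unit circle in the complex plane, parametrised by cis.\<close>

abbreviation S1 :: "complex set" where "S1 \<equiv> sphere 0 1"

definition smooth_real_fun :: "(real \<Rightarrow> complex) \<Rightarrow> bool" where
  "smooth_real_fun g \<longleftrightarrow> (\<exists>D :: nat \<Rightarrow> real \<Rightarrow> complex. D 0 = g \<and>
      (\<forall>n t. (D n has_vector_derivative D (Suc n) t) (at t)))"

definition smooth_circle_map :: "(complex \<Rightarrow> complex) \<Rightarrow> bool" where
  "smooth_circle_map f \<longleftrightarrow> f ` S1 \<subseteq> S1 \<and> smooth_real_fun (\<lambda>t. f (cis t))"

definition cdiff :: "(complex \<Rightarrow> complex) \<Rightarrow> real \<Rightarrow> complex" where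
  "cdiff f t = vector_derivative (\<lambda>s. f (cis s)) (at t)"

definition regular_value :: "(complex \<Rightarrow> complex) \<Rightarrow> complex \<Rightarrow> bool" where
  "regular_value f x \<longleftrightarrow> (\<forall>t. f (cis t) = x \<longrightarrow> cdiff f t \<noteq> 0)"

text \<open>Self-transversality: f x f is transverse to the diagonal away from the diagonal,
  i.e. at a double point f(p) = f(q), p \<noteq> q, the differentials at p and q span the tangent
  space, i.e. not both vanish.\<close>
definition self_transverse :: "(complex \<Rightarrow> complex) \<Rightarrow> bool" where
  "self_transverse f \<longleftrightarrow> (\<forall>s t. cis s \<noteq> cis t \<and> f (cis s) = f (cis t) \<longrightarrow>
      cdiff f s \<noteq> 0 \<or> cdiff f t \<noteq> 0)"

text \<open>Positive / negative arcs of f^{-1}(J), where J = cis ` {a..b} (a < b < a + 2 pi) is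
  oriented counterclockwise from cis a to cis b, and the component C = cis ` {c..d}
  carries the counterclockwise orientation of S1. The degree of
  f|C : (C, boundary C) \<rightarrow> (J, boundary J) is +1 iff the initial point of C goes to the initial
  point of J and the terminal point to the terminal point, -1 iff they are swapped.\<close>
definition positive_arc :: "(complex \<Rightarrow> complex) \<Rightarrow> real \<Rightarrow> real \<Rightarrow> complex set \<Rightarrow> bool" where
  "positive_arc f a b C \<longleftrightarrow> C \<in> components (S1 \<inter> f -` (cis ` {a..b})) \<and>
     (\<exists>c d. c < d \<and> d < c + 2 * pi \<and> C = cis ` {c..d} \<and>
            f (cis c) = cis a \<and> f (cis d) = cis b)"

definition negative_arc :: "(complex \<Rightarrow> complex) \<Rightarrow> real \<Rightarrow> real \<Rightarrow> complex set \<Rightarrow> bool" where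
  "negative_arc f a b C \<longleftrightarrow> C \<in> components (S1 \<inter> f -` (cis ` {a..b})) \<and>
     (\<exists>c d. c < d \<and> d < c + 2 * pi \<and> C = cis ` {c..d} \<and>
            f (cis c) = cis b \<and> f (cis d) = cis a)"

definition starts_with :: "(real \<Rightarrow> complex) \<Rightarrow> complex set \<Rightarrow> bool" where
  "starts_with p A \<longleftrightarrow> (\<exists>s. 0 < s \<and> s \<le> 1 \<and> p ` {0..s} = A)"

definition ends_with :: "(real \<Rightarrow> complex) \<Rightarrow> complex set \<Rightarrow> bool" where
  "ends_with p A \<longleftrightarrow> (\<exists>s. 0 \<le> s \<and> s < 1 \<and> p ` {s..1} = A)"

end

theory Submission
  imports Defs
begin

text \<open>Write f (cis t) = cis (G t) with a continuous lift G, so that G (t + 2 pi) = G t + 2 pi N.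
  Walk along the circle from the end of J+ or J- lying over x, through that arc, and let K be the
  lift of f along the walk, normalised to start at 0 and measured from x towards y: the preimage
  of J is where K lies in [0, L] modulo 2 pi, with L the length of J, and K reaches L at the end
  of the initial arc. Of the two arcs we start from the one whose direction makes the drift
  K (2 pi) nonpositive. Then K must come back from L to 0 before one full turn: after the last
  exit of K through level L comes a first arrival at level 0, and regularity of x and y makes
  both crossings transversal, so the walk between them is an isolated component of the preimage
  of J, traversed from y to x, i.e. with the opposite orientation. Stopping the walk at the
  arrival gives the path, and K itself lifts f along it to a path from 0 to 0.\<close>

section \<open>Arcs of the unit circle\<close>

lemma cis_eq_cis_iff: "cis u = cis v \<longleftrightarrow> (\<exists>k::int. u = v + 2 * pi * k)"
proof -
  have "cis u = cis v \<longleftrightarrow> sin u = sin v \<and> cos u = cos v"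
    by (auto simp: complex_eq_iff)
  then show ?thesis
    using sin_cos_eq_iff[of u v] by auto
qed

lemma cis_eq_cis_imp_eq:
  assumes "cis u = cis v" and "\<bar>u - v\<bar> < 2 * pi"
  shows "u = v"
proof -
  obtain k :: int where "u = v + 2 * pi * k"
    using assms(1) cis_eq_cis_iff by blast
  moreover from this have "k = 0"
    using assms(2) by (simp add: abs_mult)
  ultimately show ?thesis
    by simp
qed

lemma cis_affine_eq_iff:
  assumes "\<sigma> = 1 \<or> \<sigma> = -1"
  shows "cis (c + \<sigma> * s) = cis (c + \<sigma> * t) \<longleftrightarrow> cis s = cis t"
proof -
  have "cis (c + \<sigma> * s) = cis (c + \<sigma> * t) \<longleftrightarrow> cis (\<sigma> * s) = cis (\<sigma> * t)"
    by (simp flip: cis_mult)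
  also have "\<dots> \<longleftrightarrow> cis s = cis t"
    using assms by (auto simp flip: cis_inverse)
  finally show ?thesis .
qed

lemma cis_mem_arc_iff:
  assumes "L - 2 * pi < v" "v < 2 * pi"
  shows "cis v \<in> cis ` {0..L} \<longleftrightarrow> 0 \<le> v \<and> v \<le> L"
proof
  assume "cis v \<in> cis ` {0..L}"
  then obtain r where "0 \<le> r" "r \<le> L" "cis v = cis r"
    by auto
  moreover from this have "v = r"
    using assms by (intro cis_eq_cis_imp_eq) auto
  ultimately show "0 \<le> v \<and> v \<le> L"
    by simp
qed auto

lemma cis_shift_image: "(\<lambda>s. cis (c + s)) ` {t1..t2} = cis ` {c + t1..c + t2}"
proof -
  have "(\<lambda>s. cis (c + s)) ` {t1..t2} = cis ` ((+) c ` {t1..t2})"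
    by (simp only: image_image)
  then show ?thesis
    by (simp add: add.commute)
qed

lemma cis_reflect_image: "(\<lambda>s. cis (c - s)) ` {t1..t2} = cis ` {c - t2..c - t1}"
proof -
  have "(\<lambda>s. cis (c - s)) ` {t1..t2} = cis ` ((\<lambda>s. c - s) ` {t1..t2})"
    by (simp only: image_image)
  then show ?thesis
    by (simp add: image_diff_atLeastAtMost)
qed

lemma exists_cis_affine_in_window:
  assumes "\<sigma> = 1 \<or> \<sigma> = -1" and "norm z = 1"
  obtains s where "cis (c + \<sigma> * s) = z" "a \<le> s" "s < a + 2 * pi"
proof -
  define t where "t = \<sigma> * (Arg z - c)"
  have "z \<noteq> 0"
    using assms(2) by auto
  then have "cis (c + \<sigma> * t) = z"
    using assms cis_Arg[of z] by (auto simp: t_def sgn_div_norm)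
  define n where "n = \<lfloor>(t - a) / (2 * pi)\<rfloor>"
  have "of_int n \<le> (t - a) / (2 * pi)" "(t - a) / (2 * pi) < of_int n + 1"
    unfolding n_def by linarith+
  then have window: "a \<le> t - 2 * pi * n" "t - 2 * pi * n < a + 2 * pi"
    by (simp_all add: field_simps)
  have "cis (t - 2 * pi * n) = cis t"
    by (auto simp: cis_eq_cis_iff intro!: exI[of _ "-n"])
  then have "cis (c + \<sigma> * (t - 2 * pi * n)) = z"
    using cis_affine_eq_iff[OF assms(1)] \<open>cis (c + \<sigma> * t) = z\<close> by metis
  with window that show ?thesis
    by blast
qed

lemma cis_affine_interval_in_components:
  fixes c \<sigma> :: real and P :: "complex set"
  defines "\<gamma> \<equiv> \<lambda>s. cis (c + \<sigma> * s)"
  assumes \<sigma>: "\<sigma> = 1 \<or> \<sigma> = -1" and P: "P \<subseteq> sphere 0 1"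
    and "\<alpha> \<le> \<beta>" "0 < \<delta>" "\<beta> - \<alpha> + 2 * \<delta> < 2 * pi"
    and isolated: "{\<alpha> - \<delta><..<\<beta> + \<delta>} \<inter> \<gamma> -` P = {\<alpha>..\<beta>}"
  shows "\<gamma> ` {\<alpha>..\<beta>} \<in> components P"
proof -
  define C where "C = \<gamma> ` {\<alpha>..\<beta>}"
  \<comment> \<open>the complementary arc, kept at distance \<open>\<delta>/2\<close> from C; C and B are closed and cover P\<close>
  define B where "B = \<gamma> ` {\<beta> + \<delta>/2 .. \<alpha> - \<delta>/2 + 2 * pi}"
  have cont: "continuous_on A \<gamma>" for A
    unfolding \<gamma>_def by (intro continuous_intros)
  have "closed C" "closed B"
    unfolding C_def B_def by (intro compact_imp_closed compact_continuous_image cont compact_Icc)+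
  have "connected C" "C \<noteq> {}" "C \<subseteq> P"
    using isolated \<open>\<alpha> \<le> \<beta>\<close> unfolding C_def by (auto intro: connected_continuous_image cont)
  have "C \<inter> B = {}"
  proof (rule ccontr)
    assume "C \<inter> B \<noteq> {}"
    then obtain s u where s: "s \<in> {\<alpha>..\<beta>}" and u: "u \<in> {\<beta> + \<delta>/2 .. \<alpha> - \<delta>/2 + 2 * pi}"
      and "\<gamma> s = \<gamma> u"
      unfolding C_def B_def by blast
    then have "u = s"
      using cis_affine_eq_iff[OF \<sigma>] s u \<open>0 < \<delta>\<close> \<open>\<beta> - \<alpha> + 2 * \<delta> < 2 * pi\<close> unfolding \<gamma>_def
      by (intro cis_eq_cis_imp_eq) auto
    then show False
      using s u \<open>0 < \<delta>\<close> by auto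
  qed
  have "P - B \<subseteq> C"
  proof
    fix z assume z: "z \<in> P - B"
    then have "norm z = 1"
      using P by auto
    then obtain s where s: "\<gamma> s = z" "\<alpha> - \<delta>/2 \<le> s" "s < \<alpha> - \<delta>/2 + 2 * pi"
      using exists_cis_affine_in_window[OF \<sigma>, where c = c and a = "\<alpha> - \<delta>/2"]
      unfolding \<gamma>_def by blast
    have "s < \<beta> + \<delta>/2"
    proof (rule ccontr)
      assume "\<not> s < \<beta> + \<delta>/2"
      then have "z \<in> B"
        using s unfolding B_def by force
      then show False
        using z by blast
    qed
    then have "s \<in> {\<alpha>..\<beta>}"
      using isolated s z \<open>0 < \<delta>\<close> by auto
    then show "z \<in> C"
      using s unfolding C_def by blast
  qed
  have "D = C" if "C \<subseteq> D" "D \<subseteq> P" "connected D" for D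
  proof -
    have "D \<inter> C = D \<inter> - B"
      using that \<open>C \<inter> B = {}\<close> \<open>P - B \<subseteq> C\<close> by blast
    moreover have "openin (top_of_set D) (D \<inter> - B)"
      using \<open>closed B\<close> by (intro openin_open_Int) auto
    moreover have "closedin (top_of_set D) (D \<inter> C)"
      using \<open>closed C\<close> by (intro closedin_closed_Int)
    ultimately have "D \<inter> C = {} \<or> D \<inter> C = D"
      using \<open>connected D\<close> unfolding connected_clopen by metis
    then show "D = C"
      using that \<open>C \<noteq> {}\<close> by blast
  qed
  then show ?thesis
    unfolding C_def[symmetric] in_components_maximal using \<open>C \<noteq> {}\<close> \<open>C \<subseteq> P\<close> \<open>connected C\<close> by blast
qed

section \<open>Lifting circle-valued functions\<close>

lemma continuous_lift_cis_exists:
  fixes F :: "real \<Rightarrow> complex"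
  assumes "continuous_on UNIV F" and "\<And>t. norm (F t) = 1"
  obtains G where "continuous_on UNIV G" "\<And>t. F t = cis (G t)"
proof -
  have "F t \<noteq> 0" for t
    using assms(2)[of t] by auto
  then obtain g where g: "continuous_on UNIV g" "\<And>t. F t = exp (g t)"
    using continuous_logarithm_on_contractible[of UNIV F] assms(1) by auto
  have "Re (g t) = 0" for t
    using assms(2)[of t] g(2)[of t] by (simp add: norm_exp_eq_Re)
  then have "F t = cis (Im (g t))" for t
    using g(2)[of t] exp_eq_polar[of "g t"] by simp
  moreover have "continuous_on UNIV (\<lambda>t. Im (g t))"
    using g(1) by (intro continuous_intros)
  ultimately show ?thesis
    using that by blast
qed

lemma lift_cis_quasiperiodic:
  fixes F :: "real \<Rightarrow> complex"
  assumes contG: "continuous_on UNIV G" and FG: "\<And>t. F t = cis (G t)"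
    and periodic: "\<And>t. F (t + 2 * pi) = F t"
  obtains N :: int where "\<And>t. G (t + 2 * pi) = G t + 2 * pi * N"
proof -
  define h where "h t = (G (t + 2 * pi) - G t) / (2 * pi)" for t
  have h_int: "\<exists>k::int. h t = k" for t
  proof -
    have "cis (G (t + 2 * pi)) = cis (G t)"
      using FG periodic by metis
    then obtain k :: int where "G (t + 2 * pi) = G t + 2 * pi * k"
      using cis_eq_cis_iff by blast
    then show ?thesis
      unfolding h_def by auto
  qed
  have "continuous_on UNIV h"
    unfolding h_def by (intro continuous_intros continuous_on_compose2[OF contG]) auto
  then have "h constant_on UNIV"
  proof (rule continuous_discrete_range_constant[OF connected_UNIV])
    show "\<exists>e>0. \<forall>y. y \<in> UNIV \<and> h y \<noteq> h x \<longrightarrow> e \<le> norm (h y - h x)" for x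
    proof (intro exI[of _ 1] conjI allI impI)
      fix y assume "y \<in> UNIV \<and> h y \<noteq> h x"
      moreover obtain k l :: int where "h y = k" "h x = l"
        using h_int by meson
      ultimately show "1 \<le> norm (h y - h x)"
        by (simp flip: of_int_diff)
    qed simp
  qed
  then obtain c where "\<And>t. h t = c"
    unfolding constant_on_def by blast
  moreover obtain N :: int where "h 0 = N"
    using h_int by blast
  ultimately have "\<And>t. h t = N"
    by simp
  then show ?thesis
    using that unfolding h_def by (simp add: field_simps)
qed

lemma lift_cis_eq_Ln_nearby:
  fixes F :: "real \<Rightarrow> complex"
  assumes contG: "continuous_on UNIV G" and FG: "\<And>s. F s = cis (G s)"
    and contF: "continuous (at t) F"
  obtains r where "0 < r" "\<And>s. s \<in> ball t r \<Longrightarrow> G s = G t + Im (Ln (F s / F t))"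
proof -
  have "continuous (at t) (\<lambda>s. F s / F t)"
    by (intro continuous_intros contF) (simp add: FG)
  then obtain r1 where r1: "0 < r1" "\<And>s. dist s t < r1 \<Longrightarrow> dist (F s / F t) (F t / F t) < 1"
    unfolding continuous_at_eps_delta by (meson zero_less_one)
  have "continuous (at t) G"
    using contG by (simp add: continuous_on_eq_continuous_at)
  then obtain r2 where r2: "0 < r2" "\<And>s. dist s t < r2 \<Longrightarrow> dist (G s) (G t) < pi"
    unfolding continuous_at_eps_delta by (meson pi_gt_zero)
  have near: "G s = G t + Im (Ln (F s / F t))" if s: "s \<in> ball t (min r1 r2)" for s
  proof -
    define z where "z = F s / F t"
    have "dist z 1 < 1"
      using r1(2)[of s] s FG by (simp add: z_def dist_commute)
    then have "\<bar>Re z - 1\<bar> < 1"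
      using abs_Re_le_cmod[of "z - 1"] by (simp add: dist_norm)
    then have "0 < Re z"
      by linarith
    then have Ln: "\<bar>Im (Ln z)\<bar> < pi / 2"
      by (rule Re_Ln_pos_lt_imp)
    have "norm z = 1"
      using FG by (simp add: z_def norm_divide)
    have "z \<noteq> 0"
      using \<open>0 < Re z\<close> by auto
    then have "cis (Im (Ln z)) = z"
      using cis_Arg[of z] Arg_eq_Im_Ln[of z] \<open>norm z = 1\<close> by (simp add: sgn_div_norm)
    have "cis (G t + Im (Ln z)) = F t * z"
      using \<open>cis (Im (Ln z)) = z\<close> FG by (simp flip: cis_mult)
    also have "\<dots> = cis (G s)"
      using FG by (simp add: z_def)
    finally have "cis (G s) = cis (G t + Im (Ln z))" ..
    moreover have "dist (G s) (G t) < pi"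
      using r2(2)[of s] s by (simp add: dist_commute)
    then have "\<bar>G s - (G t + Im (Ln z))\<bar> < 2 * pi"
      using Ln unfolding dist_real_def abs_less_iff by (intro conjI; linarith)
    ultimately show ?thesis
      unfolding z_def by (rule cis_eq_cis_imp_eq)
  qed
  show ?thesis
    by (intro that[of "min r1 r2"] near) (simp_all add: r1(1) r2(1))
qed

lemma lift_cis_has_real_derivative:
  fixes F :: "real \<Rightarrow> complex"
  assumes contG: "continuous_on UNIV G" and FG: "\<And>s. F s = cis (G s)"
    and dF: "(F has_vector_derivative F') (at t)"
  obtains D where "(G has_real_derivative D) (at t)" "F' = D *\<^sub>R (\<i> * F t)"
proof -
  obtain r where r: "0 < r" "\<And>s. s \<in> ball t r \<Longrightarrow> G s = G t + Im (Ln (F s / F t))"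
    using lift_cis_eq_Ln_nearby[OF contG FG has_vector_derivative_continuous[OF dF]] by blast
  have "F t \<noteq> 0"
    using FG by simp
  then have "(Ln has_field_derivative 1) (at (F t / F t))"
    using has_field_derivative_Ln[of 1] by simp
  from field_vector_diff_chain_at[OF has_vector_derivative_divide[OF dF] this]
  have "((\<lambda>s. Ln (F s / F t)) has_vector_derivative F' / F t) (at t)"
    by (simp add: o_def)
  then have "((\<lambda>s. Im (Ln (F s / F t))) has_real_derivative Im (F' / F t)) (at t)"
    by (rule has_field_derivative_Im)
  then have "((\<lambda>s. G t + Im (Ln (F s / F t))) has_real_derivative Im (F' / F t)) (at t)"
    using DERIV_add[OF DERIV_const[of "G t"]] by simp
  then have dG: "(G has_real_derivative Im (F' / F t)) (at t)"
    by (rule has_field_derivative_transform_within_open[of _ _ _ "ball t r"]) (auto simp: r(1) r(2)[symmetric])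
  have "((\<lambda>s. cis (G s)) has_derivative (\<lambda>h. (Im (F' / F t) * h) *\<^sub>R (\<i> * cis (G t)))) (at t)"
    using has_derivative_cis[OF dG[unfolded has_field_derivative_def]] .
  moreover have "(\<lambda>s. cis (G s)) = F"
    using FG by auto
  ultimately have "(F has_vector_derivative Im (F' / F t) *\<^sub>R (\<i> * F t)) (at t)"
    unfolding has_vector_derivative_def by (simp add: FG mult.commute)
  then have "F' = Im (F' / F t) *\<^sub>R (\<i> * F t)"
    using vector_derivative_unique_at[OF dF] by blast
  with dG that show ?thesis
    by blast
qed

lemma smooth_circle_map_lift:
  assumes "smooth_circle_map f"
  obtains G and N :: int where "continuous_on UNIV G" "\<And>t. f (cis t) = cis (G t)"
    "\<And>t. G (t + 2 * pi) = G t + 2 * pi * N"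
    "\<And>t. cdiff f t \<noteq> 0 \<Longrightarrow> \<exists>D. D \<noteq> 0 \<and> (G has_real_derivative D) (at t)"
proof -
  define F where "F t = f (cis t)" for t
  obtain F' where F': "\<And>t. (F has_vector_derivative F' t) (at t)"
    using assms unfolding smooth_circle_map_def smooth_real_fun_def F_def by metis
  have "continuous_on UNIV F"
    using F' by (metis continuous_at_imp_continuous_on has_vector_derivative_continuous)
  moreover have "norm (F t) = 1" for t
    using assms unfolding smooth_circle_map_def F_def image_subset_iff by simp
  ultimately obtain G where contG: "continuous_on UNIV G" and FG: "\<And>t. F t = cis (G t)"
    using continuous_lift_cis_exists by blast
  have "F (t + 2 * pi) = F t" for t
    unfolding F_def by (simp flip: cis_mult)
  then obtain N :: int where "\<And>t. G (t + 2 * pi) = G t + 2 * pi * N"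
    using lift_cis_quasiperiodic[OF contG FG] by blast
  moreover have "\<exists>D. D \<noteq> 0 \<and> (G has_real_derivative D) (at t)" if "cdiff f t \<noteq> 0" for t
  proof -
    have "F' t \<noteq> 0"
      using that F'[of t] vector_derivative_at unfolding cdiff_def F_def by fastforce
    moreover obtain D where "(G has_real_derivative D) (at t)" "F' t = D *\<^sub>R (\<i> * F t)"
      using lift_cis_has_real_derivative[OF contG FG F'] by blast
    ultimately show ?thesis
      by auto
  qed
  ultimately show ?thesis
    using that contG FG unfolding F_def by blast
qed

section \<open>Crossing a band\<close>

lemma continuous_lift_stays_in_interval:
  fixes K :: "real \<Rightarrow> real"
  assumes cont: "continuous_on {0..s} K" and "K 0 = 0" "L < 2 * pi" "0 \<le> s"
    and arc: "\<And>u. u \<in> {0..s} \<Longrightarrow> cis (K u) \<in> cis ` {0..L}"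
  shows "0 \<le> K s \<and> K s \<le> L"
proof -
  have "0 \<le> L"
    using arc[of 0] \<open>0 \<le> s\<close> by fastforce
  have gap: "K u \<noteq> m" if "u \<in> {0..s}" "L < m \<and> m < 2 * pi \<or> L - 2 * pi < m \<and> m < 0" for u m
    using arc[OF that(1)] cis_mem_arc_iff[of L m] that(2) by auto
  have "K s \<le> L"
  proof (rule ccontr)
    assume "\<not> K s \<le> L"
    define m where "m = min (K s) ((L + 2 * pi) / 2)"
    have m: "L < m" "m < 2 * pi" "m \<le> K s"
      using \<open>\<not> K s \<le> L\<close> \<open>L < 2 * pi\<close> by (auto simp: m_def min_def max_def)
    obtain u where "0 \<le> u" "u \<le> s" "K u = m"
      using IVT'[of K 0 m s] cont \<open>K 0 = 0\<close> \<open>0 \<le> s\<close> \<open>0 \<le> L\<close> m by force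
    then show False
      using gap[of u m] m by auto
  qed
  moreover have "0 \<le> K s"
  proof (rule ccontr)
    assume "\<not> 0 \<le> K s"
    define m where "m = max (K s) ((L - 2 * pi) / 2)"
    have m: "L - 2 * pi < m" "m < 0" "K s \<le> m"
      using \<open>\<not> 0 \<le> K s\<close> \<open>L < 2 * pi\<close> by (auto simp: m_def min_def max_def)
    obtain u where "0 \<le> u" "u \<le> s" "K u = m"
      using IVT2'[of K s m 0] cont \<open>K 0 = 0\<close> \<open>0 \<le> s\<close> m by force
    then show False
      using gap[of u m] m by auto
  qed
  ultimately show ?thesis
    by blast
qed

lemma last_crossing:
  fixes K :: "real \<Rightarrow> real"
  assumes cont: "continuous_on {a..b} K" and "a \<le> b" "c \<le> K a" "K b < c"
  obtains t where "a \<le> t" "t < b" "K t = c" "\<And>s. t < s \<Longrightarrow> s \<le> b \<Longrightarrow> K s < c"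
proof -
  define S where "S = {a..b} \<inter> K -` {c..}"
  have "closed S"
    unfolding S_def using cont by (intro continuous_closed_preimage) auto
  then have "compact S"
    unfolding compact_eq_bounded_closed S_def by (auto intro: bounded_Int)
  moreover have "a \<in> S"
    using assms unfolding S_def by auto
  ultimately obtain t where t: "t \<in> S" "\<And>s. s \<in> S \<Longrightarrow> s \<le> t"
    using compact_attains_sup by (metis empty_iff)
  have after: "K s < c" if "t < s" "s \<le> b" for s
  proof (rule ccontr)
    assume "\<not> K s < c"
    then have "s \<in> S"
      using t that unfolding S_def by auto
    then show False
      using t(2) \<open>t < s\<close> by force
  qed
  have "K t = c"
  proof (rule ccontr)
    assume "K t \<noteq> c"
    moreover obtain s where "t \<le> s" "s \<le> b" "K s = c"
      using IVT2'[of K b c t] t cont \<open>K b < c\<close> unfolding S_def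
      by (force intro: continuous_on_subset)
    ultimately show False
      using after[of s] by (cases "s = t") auto
  qed
  moreover have "t < b"
    using t \<open>K b < c\<close> \<open>K t = c\<close> unfolding S_def by (cases "t = b") auto
  ultimately show ?thesis
    using that t after unfolding S_def by auto
qed

lemma first_crossing:
  fixes K :: "real \<Rightarrow> real"
  assumes cont: "continuous_on {a..b} K" and "a \<le> b" "c < K a" "K b \<le> c"
  obtains t where "a < t" "t \<le> b" "K t = c" "\<And>s. a \<le> s \<Longrightarrow> s < t \<Longrightarrow> c < K s"
proof -
  have "continuous_on {-b..-a} (\<lambda>s. - K (- s))"
    using cont by (intro continuous_intros continuous_on_compose2[OF cont]) auto
  then obtain t where "-b \<le> t" "t < -a" "- K (- t) = - c"
      "\<And>s. t < s \<Longrightarrow> s \<le> -a \<Longrightarrow> - K (- s) < - c"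
    using last_crossing[of "-b" "-a" "\<lambda>s. - K (- s)" "-c"] assms by auto
  then show ?thesis
    using that[of "- t"] by (metis minus_less_iff neg_le_iff_le neg_less_iff_less minus_minus equation_minus_iff)
qed

lemma DERIV_neg_if_below_after:
  fixes K :: "real \<Rightarrow> real"
  assumes "(K has_real_derivative D) (at t)" "D \<noteq> 0" "t < b"
    and below: "\<And>s. t < s \<Longrightarrow> s \<le> b \<Longrightarrow> K s < K t"
  shows "D < 0"
proof (rule ccontr)
  assume "\<not> D < 0"
  then obtain d where "0 < d" "\<And>h. 0 < h \<Longrightarrow> h < d \<Longrightarrow> K t < K (t + h)"
    using DERIV_pos_inc_right[OF assms(1)] assms(2) by (metis linorder_neqE_linordered_idom)
  moreover have "0 < min (d / 2) (b - t)" "min (d / 2) (b - t) < d"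
    using \<open>0 < d\<close> \<open>t < b\<close> by auto
  ultimately show False
    using below[of "t + min (d / 2) (b - t)"] by fastforce
qed

lemma DERIV_neg_if_above_before:
  fixes K :: "real \<Rightarrow> real"
  assumes "(K has_real_derivative D) (at t)" "D \<noteq> 0" "a < t"
    and above: "\<And>s. a \<le> s \<Longrightarrow> s < t \<Longrightarrow> K t < K s"
  shows "D < 0"
proof (rule ccontr)
  assume "\<not> D < 0"
  then obtain d where "0 < d" "\<And>h. 0 < h \<Longrightarrow> h < d \<Longrightarrow> K (t - h) < K t"
    using DERIV_pos_inc_left[OF assms(1)] assms(2) by (metis linorder_neqE_linordered_idom)
  moreover have "0 < min (d / 2) (t - a)" "min (d / 2) (t - a) < d"
    using \<open>0 < d\<close> \<open>a < t\<close> by auto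
  ultimately show False
    using above[of "t - min (d / 2) (t - a)"] by fastforce
qed

lemma DERIV_neg_crossing_nbhd:
  fixes K :: "real \<Rightarrow> real"
  assumes der: "(K has_real_derivative D) (at t)" and "D < 0" "0 < \<eta>"
  obtains d where "0 < d"
    "\<And>s. t - d < s \<Longrightarrow> s < t \<Longrightarrow> K t < K s \<and> K s < K t + \<eta>"
    "\<And>s. t < s \<Longrightarrow> s < t + d \<Longrightarrow> K t - \<eta> < K s \<and> K s < K t"
proof -
  obtain d1 where d1: "0 < d1" "\<And>h. 0 < h \<Longrightarrow> h < d1 \<Longrightarrow> K t < K (t - h)"
    using DERIV_neg_dec_left[OF der \<open>D < 0\<close>] by blast
  obtain d2 where d2: "0 < d2" "\<And>h. 0 < h \<Longrightarrow> h < d2 \<Longrightarrow> K (t + h) < K t"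
    using DERIV_neg_dec_right[OF der \<open>D < 0\<close>] by blast
  have "isCont K t"
    using der by (rule DERIV_isCont)
  then obtain d3 where d3: "0 < d3" "\<And>s. dist s t < d3 \<Longrightarrow> dist (K s) (K t) < \<eta>"
    unfolding continuous_at_eps_delta using \<open>0 < \<eta>\<close> by blast
  define d where "d = min d1 (min d2 d3)"
  have "d \<le> d1" "d \<le> d2" "d \<le> d3"
    by (simp_all add: d_def)
  show ?thesis
  proof (rule that[of d])
    show "0 < d"
      using d1 d2 d3 by (simp add: d_def)
    show "K t < K s \<and> K s < K t + \<eta>" if "t - d < s" "s < t" for s
      using d1(2)[of "t - s"] d3(2)[of s] that \<open>d \<le> d1\<close> \<open>d \<le> d3\<close>
      by (auto simp: dist_real_def abs_less_iff)
    show "K t - \<eta> < K s \<and> K s < K t" if "t < s" "s < t + d" for s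
      using d2(2)[of "s - t"] d3(2)[of s] that \<open>d \<le> d2\<close> \<open>d \<le> d3\<close>
      by (auto simp: dist_real_def abs_less_iff)
  qed
qed

lemma band_last_exit:
  fixes K :: "real \<Rightarrow> real"
  assumes cont: "continuous_on UNIV K" and "0 < L" "L < 2 * pi" "0 < e" "e < b"
    and band: "\<And>s. s \<in> {0..e} \<Longrightarrow> K s \<le> L" and "K e = L" "K b < L"
    and transversal: "\<And>t. K t = L \<Longrightarrow> \<exists>D. D \<noteq> 0 \<and> (K has_real_derivative D) (at t)"
  obtains t d where "e < t" "t < b" "K t = L" "\<And>s. t < s \<Longrightarrow> s \<le> b \<Longrightarrow> K s < L"
    "0 < d" "\<And>s. t - d < s \<Longrightarrow> s < t \<Longrightarrow> L < K s \<and> K s < 2 * pi"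
proof -
  have "continuous_on {e..b} K" "e \<le> b" "L \<le> K e"
    using cont \<open>e < b\<close> \<open>K e = L\<close> by (auto intro: continuous_on_subset)
  then obtain t where t: "e \<le> t" "t < b" "K t = L" "\<And>s. t < s \<Longrightarrow> s \<le> b \<Longrightarrow> K s < L"
    using last_crossing[of e b K L] \<open>K b < L\<close> by blast
  obtain D where D: "D \<noteq> 0" "(K has_real_derivative D) (at t)"
    using transversal t(3) by blast
  moreover have "\<And>s. t < s \<Longrightarrow> s \<le> b \<Longrightarrow> K s < K t"
    using t(3,4) by simp
  ultimately have "D < 0"
    using DERIV_neg_if_below_after[OF D(2) D(1) t(2)] by blast
  moreover have "0 < 2 * pi - L"
    using \<open>L < 2 * pi\<close> by simp
  ultimately obtain d where "0 < d"
      "\<And>s. t - d < s \<Longrightarrow> s < t \<Longrightarrow> K t < K s \<and> K s < K t + (2 * pi - L)"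
      "\<And>s. t < s \<Longrightarrow> s < t + d \<Longrightarrow> K t - (2 * pi - L) < K s \<and> K s < K t"
    by (rule DERIV_neg_crossing_nbhd[OF D(2)]) blast+
  then have d: "0 < d" "\<And>s. t - d < s \<Longrightarrow> s < t \<Longrightarrow> L < K s \<and> K s < 2 * pi"
    using t(3) by auto
  have "e < t"
  proof (rule ccontr)
    assume "\<not> e < t"
    then have "t = e"
      using t(1) by simp
    define h where "h = min (d / 2) e"
    have "0 < h" "h < d" "h \<le> e"
      using d(1) \<open>0 < e\<close> by (simp_all add: h_def)
    then show False
      using d(2)[of "e - h"] band[of "e - h"] \<open>t = e\<close> by simp
  qed
  with t d that show ?thesis
    by blast
qed

lemma band_first_return:
  fixes K :: "real \<Rightarrow> real"
  assumes cont: "continuous_on UNIV K" and "0 < L" "L < 2 * pi" "0 < e" "t < 2 * pi"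
    and band: "\<And>s. s \<in> {0..e} \<Longrightarrow> 0 \<le> K s" and "K t = L"
    and drift: "\<And>s. K (s + 2 * pi) = K s + K (2 * pi)" "K (2 * pi) \<le> 0"
    and transversal: "\<And>t'. K t' = 0 \<Longrightarrow> \<exists>D. D \<noteq> 0 \<and> (K has_real_derivative D) (at t')"
  obtains t' d where "t < t'" "t' < 2 * pi" "K t' = 0" "\<And>s. t \<le> s \<Longrightarrow> s < t' \<Longrightarrow> 0 < K s"
    "0 < d" "\<And>s. t' < s \<Longrightarrow> s < t' + d \<Longrightarrow> L - 2 * pi < K s \<and> K s < 0"
proof -
  have "continuous_on {t..2 * pi} K" "t \<le> 2 * pi" "0 < K t"
    using cont \<open>t < 2 * pi\<close> \<open>K t = L\<close> \<open>0 < L\<close> by (auto intro: continuous_on_subset)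
  then obtain t' where t': "t < t'" "t' \<le> 2 * pi" "K t' = 0" "\<And>s. t \<le> s \<Longrightarrow> s < t' \<Longrightarrow> 0 < K s"
    using first_crossing[of t "2 * pi" K 0] drift(2) by blast
  obtain D where D: "D \<noteq> 0" "(K has_real_derivative D) (at t')"
    using transversal t'(3) by blast
  moreover have "\<And>s. t \<le> s \<Longrightarrow> s < t' \<Longrightarrow> K t' < K s"
    using t'(3,4) by simp
  ultimately have "D < 0"
    using DERIV_neg_if_above_before[OF D(2) D(1) t'(1)] by blast
  moreover have "0 < 2 * pi - L"
    using \<open>L < 2 * pi\<close> by simp
  ultimately obtain d where "0 < d"
      "\<And>s. t' - d < s \<Longrightarrow> s < t' \<Longrightarrow> K t' < K s \<and> K s < K t' + (2 * pi - L)"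
      "\<And>s. t' < s \<Longrightarrow> s < t' + d \<Longrightarrow> K t' - (2 * pi - L) < K s \<and> K s < K t'"
    by (rule DERIV_neg_crossing_nbhd[OF D(2)]) blast+
  then have d: "0 < d" "\<And>s. t' < s \<Longrightarrow> s < t' + d \<Longrightarrow> L - 2 * pi < K s \<and> K s < 0"
    using t'(3) by auto
  have "t' < 2 * pi"
  proof (rule ccontr)
    assume "\<not> t' < 2 * pi"
    then have "t' = 2 * pi"
      using t'(2) by simp
    define h where "h = min (d / 2) e"
    have "0 < h" "h < d" "h \<le> e"
      using d(1) \<open>0 < e\<close> by (simp_all add: h_def)
    then have "K (2 * pi + h) < 0"
      using d(2)[of "2 * pi + h"] \<open>t' = 2 * pi\<close> by simp
    moreover have "K (2 * pi + h) = K h"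
      using drift(1)[of h] t'(3) \<open>t' = 2 * pi\<close> by (simp add: add.commute)
    ultimately show False
      using band[of h] \<open>0 < h\<close> \<open>h \<le> e\<close> by simp
  qed
  with t' d that show ?thesis
    by blast
qed

lemma band_interval_isolated:
  fixes K :: "real \<Rightarrow> real"
  assumes "t1 \<le> t2" "t2 - t1 < 2 * pi" "L < 2 * pi"
    and inside: "\<And>s. s \<in> {t1..t2} \<Longrightarrow> 0 \<le> K s \<and> K s \<le> L"
    and d1: "0 < d1" "\<And>s. t1 - d1 < s \<Longrightarrow> s < t1 \<Longrightarrow> L < K s \<and> K s < 2 * pi"
    and d2: "0 < d2" "\<And>s. t2 < s \<Longrightarrow> s < t2 + d2 \<Longrightarrow> L - 2 * pi < K s \<and> K s < 0"
  obtains \<delta> where "0 < \<delta>" "t2 - t1 + 2 * \<delta> < 2 * pi"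
    "{t1 - \<delta><..<t2 + \<delta>} \<inter> {s. cis (K s) \<in> cis ` {0..L}} = {t1..t2}"
proof -
  define \<delta> where "\<delta> = min (min d1 d2) ((2 * pi - (t2 - t1)) / 3)"
  have "\<delta> \<le> (2 * pi - (t2 - t1)) / 3"
    unfolding \<delta>_def by (rule min.cobounded2)
  then have "t2 - t1 + 2 * \<delta> < 2 * pi"
    using \<open>t2 - t1 < 2 * pi\<close> by simp
  moreover have "0 < \<delta>" "\<delta> \<le> d1" "\<delta> \<le> d2"
    using d1(1) d2(1) \<open>t2 - t1 < 2 * pi\<close> by (simp_all add: \<delta>_def)
  moreover have "s \<in> {t1..t2}" if "t1 - \<delta> < s" "s < t2 + \<delta>" "cis (K s) \<in> cis ` {0..L}" for s
  proof (rule ccontr)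
    assume "s \<notin> {t1..t2}"
    then consider "s < t1" | "t2 < s"
      by fastforce
    then have "L < K s \<and> K s < 2 * pi \<or> L - 2 * pi < K s \<and> K s < 0"
      using d1(2)[of s] d2(2)[of s] that(1,2) \<open>\<delta> \<le> d1\<close> \<open>\<delta> \<le> d2\<close> by cases auto
    then show False
      using that(3) cis_mem_arc_iff[of L "K s"] by auto
  qed
  moreover have "cis (K s) \<in> cis ` {0..L}" if "s \<in> {t1..t2}" for s
    using inside[OF that] by auto
  ultimately show ?thesis
    using that[of \<delta>] by fastforce
qed

lemma downward_band_crossing:
  fixes K :: "real \<Rightarrow> real"
  assumes cont: "continuous_on UNIV K" and "K 0 = 0" and L: "0 < L" "L < 2 * pi"
    and e: "0 < e" "e < 2 * pi"
    and start: "\<And>s. s \<in> {0..e} \<Longrightarrow> cis (K s) \<in> cis ` {0..L}" and "cis (K e) = cis L"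
    and drift: "\<And>s. K (s + 2 * pi) = K s + K (2 * pi)" "K (2 * pi) \<le> 0"
    and transversal: "\<And>s. K s = 0 \<or> K s = L \<Longrightarrow> \<exists>D. D \<noteq> 0 \<and> (K has_real_derivative D) (at s)"
  obtains t1 t2 \<delta> where "e < t1" "t1 < t2" "t2 < 2 * pi" "K t1 = L" "K t2 = 0" "0 < \<delta>"
    "t2 - t1 + 2 * \<delta> < 2 * pi"
    "{t1 - \<delta><..<t2 + \<delta>} \<inter> {s. cis (K s) \<in> cis ` {0..L}} = {t1..t2}"
proof -
  have band: "0 \<le> K s \<and> K s \<le> L" if "s \<in> {0..e}" for s
    using continuous_lift_stays_in_interval[of s K L] cont start \<open>K 0 = 0\<close> L that
    by (auto intro: continuous_on_subset)
  have Ke: "K e = L"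
    using band[of e] \<open>cis (K e) = cis L\<close> e L by (intro cis_eq_cis_imp_eq) auto
  have below: "K (2 * pi) < L"
    using drift(2) L by simp
  have band_le: "\<And>s. s \<in> {0..e} \<Longrightarrow> K s \<le> L" and band_ge: "\<And>s. s \<in> {0..e} \<Longrightarrow> 0 \<le> K s"
    using band by blast+
  have transversal_L: "\<And>s. K s = L \<Longrightarrow> \<exists>D. D \<noteq> 0 \<and> (K has_real_derivative D) (at s)"
    and transversal_0: "\<And>s. K s = 0 \<Longrightarrow> \<exists>D. D \<noteq> 0 \<and> (K has_real_derivative D) (at s)"
    using transversal by blast+
  obtain t1 d1 where
    t1: "e < t1" "t1 < 2 * pi" "K t1 = L" "\<And>s. t1 < s \<Longrightarrow> s \<le> 2 * pi \<Longrightarrow> K s < L"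
    and d1: "0 < d1" "\<And>s. t1 - d1 < s \<Longrightarrow> s < t1 \<Longrightarrow> L < K s \<and> K s < 2 * pi"
    using band_last_exit[OF cont L e band_le Ke below transversal_L] by blast
  obtain t2 d2 where
    t2: "t1 < t2" "t2 < 2 * pi" "K t2 = 0" "\<And>s. t1 \<le> s \<Longrightarrow> s < t2 \<Longrightarrow> 0 < K s"
    and d2: "0 < d2" "\<And>s. t2 < s \<Longrightarrow> s < t2 + d2 \<Longrightarrow> L - 2 * pi < K s \<and> K s < 0"
    using band_first_return[OF cont L e(1) t1(2) band_ge t1(3) drift transversal_0] by blast
  have inside: "0 \<le> K s \<and> K s \<le> L" if "s \<in> {t1..t2}" for s
    using that t1(3) t1(4)[of s] t2(2,3) t2(4)[of s] by (cases "s = t1"; cases "s = t2") auto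
  have "t1 \<le> t2" and length: "t2 - t1 < 2 * pi"
    using t1(1) t2(1,2) e(1) by simp_all
  then obtain \<delta> where "0 < \<delta>" "t2 - t1 + 2 * \<delta> < 2 * pi"
    "{t1 - \<delta><..<t2 + \<delta>} \<inter> {s. cis (K s) \<in> cis ` {0..L}} = {t1..t2}"
    by (rule band_interval_isolated[of t1 t2 L K d1 d2]) (use \<open>t1 \<le> t2\<close> length L(2) inside d1 d2 in blast)+
  with t1 t2 that show ?thesis
    by blast
qed

section \<open>Return arcs\<close>

definition liftable_return_arc :: "(complex \<Rightarrow> complex) \<Rightarrow> complex \<Rightarrow> (real \<Rightarrow> complex) \<Rightarrow> bool" where
  "liftable_return_arc f x p \<longleftrightarrow> arc p \<and> path_image p \<subseteq> S1 \<and> f (p 0) = x \<and> f (p 1) = x \<and>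
     (\<exists>g. continuous_on {0..1} g \<and> g 0 = 0 \<and> g 1 = 0 \<and> (\<forall>t\<in>{0..1}. f (p t) = x * cis (g t)))"

lemma image_rescaled_interval:
  fixes T :: real
  assumes "0 < T"
  shows "(\<lambda>u. \<gamma> (T * u)) ` {a / T..b / T} = \<gamma> ` {a..b}"
proof -
  have "(\<lambda>u. \<gamma> (T * u)) ` {a / T..b / T} = \<gamma> ` ((*) T ` {a / T..b / T})"
    by (simp add: image_image)
  also have "\<dots> = \<gamma> ` {a..b}"
    using image_mult_atLeastAtMost[OF assms, of "a / T" "b / T"] assms by simp
  finally show ?thesis .
qed

lemma liftable_return_arc_traversal:
  fixes f :: "complex \<Rightarrow> complex" and G :: "real \<Rightarrow> real"
  assumes \<sigma>: "\<sigma> = 1 \<or> \<sigma> = -1" and T: "0 < T" "T < 2 * pi"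
    and contG: "continuous_on UNIV G" and lift: "\<And>t. f (cis t) = cis (G t)"
    and "f (cis c) = x" and "G (c + \<sigma> * T) = G c"
  shows "liftable_return_arc f x (\<lambda>u. cis (c + \<sigma> * (T * u)))"
proof -
  define p where "p u = cis (c + \<sigma> * (T * u))" for u
  have "inj_on p {0..1}"
  proof (rule inj_onI)
    fix u v :: real assume "u \<in> {0..1}" "v \<in> {0..1}" "p u = p v"
    then have "cis (T * u) = cis (T * v)"
      using cis_affine_eq_iff[OF \<sigma>] by (simp add: p_def)
    moreover have "0 \<le> T * u" "T * u \<le> T" "0 \<le> T * v" "T * v \<le> T"
      using T \<open>u \<in> {0..1}\<close> \<open>v \<in> {0..1}\<close> by (auto intro: mult_left_le)
    then have "\<bar>T * u - T * v\<bar> < 2 * pi"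
      using T unfolding abs_less_iff by (intro conjI; linarith)
    ultimately have "T * u = T * v"
      by (rule cis_eq_cis_imp_eq)
    then show "u = v"
      using T by simp
  qed
  moreover have "continuous_on {0..1} p"
    unfolding p_def by (intro continuous_intros)
  ultimately have "arc p"
    by (simp add: arc_def path_def)
  moreover have "path_image p \<subseteq> S1"
    by (auto simp: path_image_def p_def)
  moreover have "x = cis (G c)"
    using lift \<open>f (cis c) = x\<close> by simp
  moreover have "continuous_on {0..1} (\<lambda>u. G (c + \<sigma> * (T * u)) - G c)"
    by (intro continuous_intros continuous_on_compose2[OF contG]) auto
  ultimately show ?thesis
    unfolding liftable_return_arc_def p_def[symmetric] using \<open>G (c + \<sigma> * T) = G c\<close>
    by (intro conjI exI[of _ "\<lambda>u. G (c + \<sigma> * (T * u)) - G c"]) (auto simp: p_def lift cis_mult)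
qed

definition oriented_arc :: "(complex \<Rightarrow> complex) \<Rightarrow> complex set \<Rightarrow> complex \<Rightarrow> complex \<Rightarrow> complex set \<Rightarrow> bool" where
  "oriented_arc f J u v C \<longleftrightarrow> C \<in> components (S1 \<inter> f -` J) \<and>
     (\<exists>c d. c < d \<and> d < c + 2 * pi \<and> C = cis ` {c..d} \<and> f (cis c) = u \<and> f (cis d) = v)"

context
  fixes f :: "complex \<Rightarrow> complex" and G :: "real \<Rightarrow> real" and N :: int
    and \<epsilon> L :: real and x y :: complex and J :: "complex set"
  assumes contG: "continuous_on UNIV G" and lift: "\<And>t. f (cis t) = cis (G t)"
    and degree: "\<And>t. G (t + 2 * pi) = G t + 2 * pi * N"
    and regular: "\<And>t. f (cis t) = x \<or> f (cis t) = y \<Longrightarrow> \<exists>D. D \<noteq> 0 \<and> (G has_real_derivative D) (at t)"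
    and \<epsilon>: "\<epsilon> = 1 \<or> \<epsilon> = -1" and L: "0 < L" "L < 2 * pi"
    and J: "J = (\<lambda>r. x * cis (\<epsilon> * r)) ` {0..L}" and y: "y = x * cis (\<epsilon> * L)"
begin

lemma traversal_lift:
  fixes c \<sigma> :: real
  defines "K \<equiv> \<lambda>s. \<epsilon> * (G (c + \<sigma> * s) - G c)"
  assumes \<sigma>: "\<sigma> = 1 \<or> \<sigma> = -1"
  shows "K (s + 2 * pi) = K s + \<epsilon> * \<sigma> * (2 * pi * N)"
    and "f (cis (c + \<sigma> * s)) = x \<or> f (cis (c + \<sigma> * s)) = y \<Longrightarrow>
      \<exists>D. D \<noteq> 0 \<and> (K has_real_derivative D) (at s)"
proof -
  have "G (c + \<sigma> * (s + 2 * pi)) = G (c + \<sigma> * s) + \<sigma> * (2 * pi * N)"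
    using \<sigma> degree[of "c + \<sigma> * s"] degree[of "c + \<sigma> * (s + 2 * pi)"] by (auto simp: algebra_simps)
  then show "K (s + 2 * pi) = K s + \<epsilon> * \<sigma> * (2 * pi * N)"
    by (simp add: K_def algebra_simps)
next
  assume "f (cis (c + \<sigma> * s)) = x \<or> f (cis (c + \<sigma> * s)) = y"
  then obtain D where "D \<noteq> 0" "(G has_real_derivative D) (at (c + \<sigma> * s))"
    using regular by blast
  moreover from this(2) have "(K has_real_derivative \<epsilon> * (D * \<sigma>)) (at s)"
    unfolding K_def by (auto intro!: derivative_eq_intros DERIV_chain2[of G])
  moreover have "\<epsilon> * (D * \<sigma>) \<noteq> 0"
    using \<open>D \<noteq> 0\<close> \<epsilon> \<sigma> by auto
  ultimately show "\<exists>D. D \<noteq> 0 \<and> (K has_real_derivative D) (at s)"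
    by blast
qed

lemma return_arc_along_traversal:
  fixes c \<sigma> :: real
  defines "\<gamma> \<equiv> \<lambda>s. cis (c + \<sigma> * s)"
  assumes \<sigma>: "\<sigma> = 1 \<or> \<sigma> = -1"
    and e: "0 < e" "e < 2 * pi"
    and start: "\<gamma> ` {0..e} \<subseteq> f -` J" "f (\<gamma> 0) = x" "f (\<gamma> e) = y"
    and sign: "\<epsilon> * \<sigma> * N \<le> 0"
  obtains t1 t2 where "e < t1" "t1 < t2" "t2 < 2 * pi" "f (\<gamma> t1) = y" "G (c + \<sigma> * t2) = G c"
    "\<gamma> ` {t1..t2} \<in> components (S1 \<inter> f -` J)"
proof -
  define K where "K s = \<epsilon> * (G (c + \<sigma> * s) - G c)" for s
  have x: "x = cis (G c)"
    using start(2) lift by (simp add: \<gamma>_def)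
  have fK: "f (\<gamma> s) = x * cis (\<epsilon> * K s)" for s
    using \<epsilon> lift by (auto simp: \<gamma>_def K_def x cis_mult)
  have cis_sign: "cis (\<epsilon> * u) = cis (\<epsilon> * v) \<longleftrightarrow> cis u = cis v" for u v
    using cis_affine_eq_iff[OF \<epsilon>, of 0] by simp
  have memJ: "f (\<gamma> s) \<in> J \<longleftrightarrow> cis (K s) \<in> cis ` {0..L}" for s
    unfolding fK J using x by (auto simp: cis_sign)
  have "continuous_on UNIV K"
    unfolding K_def by (intro continuous_intros continuous_on_compose2[OF contG]) auto
  moreover have "K 0 = 0"
    by (simp add: K_def)
  moreover have "cis (K s) \<in> cis ` {0..L}" if "s \<in> {0..e}" for s
    using start(1) that memJ by blast
  moreover have "cis (K e) = cis L"
    using start(3) fK[of e] y x cis_sign by simp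
  moreover have K_shift: "K (s + 2 * pi) = K s + \<epsilon> * \<sigma> * (2 * pi * N)" for s
    using traversal_lift(1)[OF \<sigma>] unfolding K_def .
  then have "K (s + 2 * pi) = K s + K (2 * pi)" for s
    using K_shift[of 0] \<open>K 0 = 0\<close> by simp
  moreover have "K (2 * pi) \<le> 0"
    using K_shift[of 0] \<open>K 0 = 0\<close> sign by (simp add: mult_nonneg_nonpos mult.assoc)
  moreover have "\<exists>D. D \<noteq> 0 \<and> (K has_real_derivative D) (at s)" if "K s = 0 \<or> K s = L" for s
  proof -
    have "f (\<gamma> s) = x \<or> f (\<gamma> s) = y"
      using that fK[of s] y by auto
    then show ?thesis
      using traversal_lift(2)[OF \<sigma>] unfolding \<gamma>_def K_def[abs_def] by blast
  qed
  ultimately obtain t1 t2 \<delta> where t: "e < t1" "t1 < t2" "t2 < 2 * pi" "K t1 = L" "K t2 = 0" 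
      and \<delta>: "0 < \<delta>" "t2 - t1 + 2 * \<delta> < 2 * pi"
      and isolated: "{t1 - \<delta><..<t2 + \<delta>} \<inter> {s. cis (K s) \<in> cis ` {0..L}} = {t1..t2}"
    using downward_band_crossing[OF _ _ L e] by blast
  have "\<gamma> -` (S1 \<inter> f -` J) = {s. cis (K s) \<in> cis ` {0..L}}"
    using memJ by (auto simp: \<gamma>_def)
  then have "\<gamma> ` {t1..t2} \<in> components (S1 \<inter> f -` J)"
    using cis_affine_interval_in_components[OF \<sigma> _ _ \<delta>(1,2)] t(2) isolated
    unfolding \<gamma>_def by auto
  moreover have "f (\<gamma> t1) = y" "G (c + \<sigma> * t2) = G c"
    using fK[of t1] t y \<epsilon> by (auto simp: K_def)
  ultimately show ?thesis
    using that t by blast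
qed

lemma liftable_return_arc_from_traversal:
  fixes c \<sigma> :: real
  assumes \<gamma>_def: "\<gamma> = (\<lambda>s. cis (c + \<sigma> * s))"
    and \<sigma>: "\<sigma> = 1 \<or> \<sigma> = -1"
    and e: "0 < e" "e < 2 * pi"
    and start: "\<gamma> ` {0..e} \<subseteq> f -` J" "f (\<gamma> 0) = x" "f (\<gamma> e) = y"
    and sign: "\<epsilon> * \<sigma> * N \<le> 0"
  obtains t1 t2 p where "0 < t1" "t1 < t2" "t2 < 2 * pi" "f (\<gamma> t1) = y" "f (\<gamma> t2) = x"
    "\<gamma> ` {t1..t2} \<in> components (S1 \<inter> f -` J)"
    "liftable_return_arc f x p" "starts_with p (\<gamma> ` {0..e})" "ends_with p (\<gamma> ` {t1..t2})"
proof -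
  obtain t1 t2 where t: "e < t1" "t1 < t2" "t2 < 2 * pi" "f (\<gamma> t1) = y" "G (c + \<sigma> * t2) = G c"
    and comp: "\<gamma> ` {t1..t2} \<in> components (S1 \<inter> f -` J)"
    using return_arc_along_traversal[OF \<sigma> e start[unfolded \<gamma>_def] sign]
    unfolding \<gamma>_def by blast
  define p where "p u = \<gamma> (t2 * u)" for u
  have "f (cis c) = x" "0 < t2"
    using start(2) t e by (simp_all add: \<gamma>_def)
  then have "liftable_return_arc f x p"
    using liftable_return_arc_traversal[OF \<sigma> _ t(3) contG lift _ t(5)] unfolding p_def \<gamma>_def by blast
  moreover have "f (\<gamma> t2) = x"
    using lift t(5) \<open>f (cis c) = x\<close> by (simp add: \<gamma>_def)
  moreover have "p ` {0..e / t2} = \<gamma> ` {0..e}" "p ` {t1 / t2..1} = \<gamma> ` {t1..t2}"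
    using image_rescaled_interval[of t2 \<gamma> 0 e] image_rescaled_interval[of t2 \<gamma> t1 t2] t e
    unfolding p_def by simp_all
  then have "starts_with p (\<gamma> ` {0..e})" "ends_with p (\<gamma> ` {t1..t2})"
    unfolding starts_with_def ends_with_def using t e
    by (intro exI[of _ "e / t2"] exI[of _ "t1 / t2"]; simp)+
  ultimately show ?thesis
    using that[of t1 t2 p] t e comp by simp
qed

lemma liftable_return_arc_forward:
  assumes A: "oriented_arc f J x y A" and sign: "\<epsilon> * N \<le> 0"
  shows "\<exists>p. liftable_return_arc f x p \<and> starts_with p A \<and> (\<exists>C. oriented_arc f J y x C \<and> ends_with p C)"
proof -
  obtain c d where cd: "0 < d - c" "d - c < 2 * pi" "A = cis ` {c..d}" "f (cis (c + 0)) = x"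
      "f (cis (c + (d - c))) = y" and "A \<subseteq> f -` J"
    using A unfolding oriented_arc_def by (auto dest: in_components_subset)
  have A_traversal: "A = (\<lambda>s. cis (c + s)) ` {0..d - c}"
    unfolding cd(3) cis_shift_image by simp
  have \<gamma>: "(\<lambda>s. cis (c + s)) = (\<lambda>s. cis (c + 1 * s))" and \<sigma>: "(1::real) = 1 \<or> (1::real) = -1"
    and sign': "\<epsilon> * 1 * N \<le> 0" and start: "(\<lambda>s. cis (c + s)) ` {0..d - c} \<subseteq> f -` J"
    using sign \<open>A \<subseteq> f -` J\<close> A_traversal by simp_all
  from liftable_return_arc_from_traversal[OF \<gamma> \<sigma> cd(1,2) start cd(4,5) sign']
  obtain t1 t2 p where t: "0 < t1" "t1 < t2" "t2 < 2 * pi"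
    and C: "f (cis (c + t1)) = y" "f (cis (c + t2)) = x"
      "(\<lambda>s. cis (c + s)) ` {t1..t2} \<in> components (S1 \<inter> f -` J)"
    and p: "liftable_return_arc f x p" "starts_with p A" "ends_with p ((\<lambda>s. cis (c + s)) ` {t1..t2})"
    unfolding A_traversal by blast
  have "c + t1 < c + t2" "c + t2 < c + t1 + 2 * pi"
    using t by simp_all
  then have "oriented_arc f J y x (cis ` {c + t1..c + t2})"
    using C unfolding oriented_arc_def cis_shift_image by blast
  with p show ?thesis
    unfolding cis_shift_image by blast
qed

lemma liftable_return_arc_backward:
  assumes B: "oriented_arc f J y x B" and sign: "0 \<le> \<epsilon> * N"
  shows "\<exists>p. liftable_return_arc f x p \<and> starts_with p B \<and> (\<exists>C. oriented_arc f J x y C \<and> ends_with p C)"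
proof -
  obtain c d where cd: "0 < d - c" "d - c < 2 * pi" "B = cis ` {c..d}" "f (cis (d - 0)) = x"
      "f (cis (d - (d - c))) = y" and "B \<subseteq> f -` J"
    using B unfolding oriented_arc_def by (auto dest: in_components_subset)
  have B_traversal: "B = (\<lambda>s. cis (d - s)) ` {0..d - c}"
    unfolding cd(3) cis_reflect_image by simp
  have \<gamma>: "(\<lambda>s. cis (d - s)) = (\<lambda>s. cis (d + -1 * s))" and \<sigma>: "(-1::real) = 1 \<or> (-1::real) = -1"
    and sign': "\<epsilon> * -1 * N \<le> 0" and start: "(\<lambda>s. cis (d - s)) ` {0..d - c} \<subseteq> f -` J"
    using sign \<open>B \<subseteq> f -` J\<close> B_traversal by simp_all
  from liftable_return_arc_from_traversal[OF \<gamma> \<sigma> cd(1,2) start cd(4,5) sign']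
  obtain t1 t2 p where t: "0 < t1" "t1 < t2" "t2 < 2 * pi"
    and C: "f (cis (d - t1)) = y" "f (cis (d - t2)) = x"
      "(\<lambda>s. cis (d - s)) ` {t1..t2} \<in> components (S1 \<inter> f -` J)"
    and p: "liftable_return_arc f x p" "starts_with p B" "ends_with p ((\<lambda>s. cis (d - s)) ` {t1..t2})"
    unfolding B_traversal by blast
  have "d - t2 < d - t1" "d - t1 < d - t2 + 2 * pi"
    using t by simp_all
  then have "oriented_arc f J x y (cis ` {d - t2..d - t1})"
    using C unfolding oriented_arc_def cis_reflect_image by blast
  with p show ?thesis
    unfolding cis_reflect_image by blast
qed

end

lemma cis_arc_from_endpoint:
  assumes "(x = cis a \<and> y = cis b) \<or> (x = cis b \<and> y = cis a)"
  obtains \<epsilon> where "\<epsilon> = 1 \<or> \<epsilon> = -1" "cis ` {a..b} = (\<lambda>r. x * cis (\<epsilon> * r)) ` {0..b - a}"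
    "y = x * cis (\<epsilon> * (b - a))"
  using assms
proof
  assume xy: "x = cis a \<and> y = cis b"
  have "(\<lambda>r. x * cis (1 * r)) ` {0..b - a} = cis ` ((\<lambda>r. r + a) ` {0..b - a})"
    unfolding image_image using xy by (simp add: cis_mult add.commute)
  also have "\<dots> = cis ` {a..b}"
    by simp
  finally show ?thesis
    using that[of 1] xy by (simp add: cis_mult)
next
  assume xy: "x = cis b \<and> y = cis a"
  have "(\<lambda>r. x * cis (-1 * r)) ` {0..b - a} = cis ` ((\<lambda>r. b - r) ` {0..b - a})"
    unfolding image_image using xy by (simp add: cis_mult)
  also have "\<dots> = cis ` {a..b}"
    by (simp add: image_diff_atLeastAtMost)
  finally show ?thesis
    using that[of "-1"] xy by (simp add: cis_mult)
qed

lemma liftable_return_arc_exists: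
  fixes f :: "complex \<Rightarrow> complex" and a b :: real
  defines "J \<equiv> cis ` {a..b}"
  assumes smooth: "smooth_circle_map f" and "a < b" "b < a + 2 * pi"
    and xy: "(x = cis a \<and> y = cis b) \<or> (x = cis b \<and> y = cis a)"
    and regular_x: "regular_value f x" and regular_y: "regular_value f y"
    and A: "oriented_arc f J x y A" and B: "oriented_arc f J y x B"
  shows "(\<exists>p. liftable_return_arc f x p \<and> starts_with p A \<and> (\<exists>C. oriented_arc f J y x C \<and> ends_with p C)) \<or>
         (\<exists>p. liftable_return_arc f x p \<and> starts_with p B \<and> (\<exists>C. oriented_arc f J x y C \<and> ends_with p C))"
proof -
  obtain G and N :: int where contG: "continuous_on UNIV G" and lift: "\<And>t. f (cis t) = cis (G t)"
    and degree: "\<And>t. G (t + 2 * pi) = G t + 2 * pi * N"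
    and deriv: "\<And>t. cdiff f t \<noteq> 0 \<Longrightarrow> \<exists>D. D \<noteq> 0 \<and> (G has_real_derivative D) (at t)"
    using smooth_circle_map_lift[OF smooth] by blast
  have regular: "\<And>t. f (cis t) = x \<or> f (cis t) = y \<Longrightarrow> \<exists>D. D \<noteq> 0 \<and> (G has_real_derivative D) (at t)"
    using regular_x regular_y deriv unfolding regular_value_def by blast
  obtain \<epsilon> where \<epsilon>: "\<epsilon> = 1 \<or> \<epsilon> = -1" and J: "J = (\<lambda>r. x * cis (\<epsilon> * r)) ` {0..b - a}"
    and y: "y = x * cis (\<epsilon> * (b - a))"
    using cis_arc_from_endpoint[OF xy] unfolding J_def by blast
  have L: "0 < b - a" "b - a < 2 * pi"
    using \<open>a < b\<close> \<open>b < a + 2 * pi\<close> by simp_all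
  \<comment> \<open>traverse A forwards or B backwards, whichever gives the normalised lift nonpositive drift\<close>
  show ?thesis
  proof (cases "\<epsilon> * N \<le> 0")
    case True
    then show ?thesis
      using liftable_return_arc_forward[OF contG lift degree regular \<epsilon> L J y A] by blast
  next
    case False
    then show ?thesis
      using liftable_return_arc_backward[OF contG lift degree regular \<epsilon> L J y B] by simp
  qed
qed

theorem lemma3:
  fixes f :: "complex \<Rightarrow> complex" and a b :: real and x y :: complex
    and Jp Jm :: "complex set"
  assumes "smooth_circle_map f"
    and "self_transverse f"
    and "a < b" and "b < a + 2 * pi"
    and "(x = cis a \<and> y = cis b) \<or> (x = cis b \<and> y = cis a)"
    and "regular_value f x" and "regular_value f y"
    and "positive_arc f a b Jp" and "negative_arc f a b Jm"
  shows "\<exists>p :: real \<Rightarrow> complex.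
           arc p \<and> path_image p \<subseteq> S1 \<and> f (p 0) = x \<and> f (p 1) = x \<and>
           ((starts_with p Jp \<and> (\<exists>Jm'. negative_arc f a b Jm' \<and> ends_with p Jm')) \<or>
            (starts_with p Jm \<and> (\<exists>Jp'. positive_arc f a b Jp' \<and> ends_with p Jp'))) \<and>
           (\<exists>g :: real \<Rightarrow> real. continuous_on {0..1} g \<and> g 0 = 0 \<and> g 1 = 0 \<and>
              (\<forall>t\<in>{0..1}. f (p t) = x * cis (g t)))"
proof -
  have positive: "positive_arc f a b C \<longleftrightarrow> oriented_arc f (cis ` {a..b}) (cis a) (cis b) C" for C
    unfolding positive_arc_def oriented_arc_def ..
  have negative: "negative_arc f a b C \<longleftrightarrow> oriented_arc f (cis ` {a..b}) (cis b) (cis a) C" for C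
    unfolding negative_arc_def oriented_arc_def ..
  note exists = liftable_return_arc_exists[OF assms(1,3,4,5,6,7)]
  from assms(5) show ?thesis
  proof
    assume "x = cis a \<and> y = cis b"
    then show ?thesis
      using exists[of Jp Jm] assms(8,9) unfolding positive negative liftable_return_arc_def by auto
  next
    assume "x = cis b \<and> y = cis a"
    then show ?thesis
      using exists[of Jm Jp] assms(8,9) unfolding positive negative liftable_return_arc_def by auto
  qed
qed

end
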